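(* For the system $$u_{0,0}-v_{1,1}=0,\qquad (u_{1,0}-u_{0,0})(v_{1,0}-u_{0,0})-(u_{0,1}-u_{0,0})(v_{0,1}-u_{0,0})=0,$$ each of the following is a symmetry: $$\frac{\partial u_{0,0}}{\partial t_1}=\frac{u_{0,0}-v_{1,0}}{u_{-1,0}-v_{1,0}},\qquad \frac{\partial v_{0,0}}{\partial t_1}=\frac{u_{-1,0}-v_{0,0}}{u_{-1,0}-v_{1,0}},$$ and $$\frac{\partial u_{0,0}}{\partial s_1}=(u_{1,0}-u_{0,0})(v_{1,0}-u_{0,0}),\qquad \frac{\partial v_{0,0}}{\partial s_1}=(u_{-1,0}-v_{0,0})(v_{-1,0}-v_{0,0}).$$
   Context: Unknowns $u,v$ on $\mathbb Z^2$, $u_{i,j}=u(n+i,m+j)$, similarly $v$. Shifts $\mathcal S:n\mapsto n+1$, $\mathcal T:m\mapsto m+1$. For a quad system $\boldsymbol Q(\boldsymbol u_{0,0},\boldsymbol u_{1,0},\boldsymbol u_{0,1},\boldsymbol u_{1,1})=\boldsymbol 0$ with $\boldsymbol u=(u,v)$ and Jacobians $\mathrm Q_{(p,q)}=\partial\boldsymbol Q/\partial\boldsymbol u_{p,q}$, a vector function $\boldsymbol F(n,m,[\boldsymbol u])=(F^{(1)},F^{(2)})$ is a symmetry, written $\partial_t u_{0,0}=F^{(1)}$, $\partial_t v_{0,0}=F^{(2)}$, if $\mathrm Q_{(0,0)}\boldsymbol F+\mathrm Q_{(1,0)}\mathcal S(\boldsymbol F)+\mathrm Q_{(0,1)}\mathcal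 T(\boldsymbol F)+\mathrm Q_{(1,1)}\mathcal S\mathcal T(\boldsymbol F)=\boldsymbol 0$ holds on all solutions of the system (where $\mathcal S^p\mathcal T^q(\boldsymbol F)$ is $\boldsymbol F$ with all shifts of $\boldsymbol u$ shifted by $(p,q)$). *)

theory Defs
  imports Complex_Main
begin

type_synonym field2 = "int \<Rightarrow> int \<Rightarrow> real"

definition Q1 :: "real \<Rightarrow> real \<Rightarrow> real \<Rightarrow> real \<Rightarrow> real \<Rightarrow> real \<Rightarrow> real \<Rightarrow> real \<Rightarrow> real" where
  "Q1 u00 v00 u10 v10 u01 v01 u11 v11 = u00 - v11"

definition Q2 :: "real \<Rightarrow> real \<Rightarrow> real \<Rightarrow> real \<Rightarrow> real \<Rightarrow> real \<Rightarrow> real \<Rightarrow> real \<Rightarrow> real" where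
  "Q2 u00 v00 u10 v10 u01 v01 u11 v11 =
     (u10 - u00) * (v10 - u00) - (u01 - u00) * (v01 - u00)"

definition at_quad ::
  "(real \<Rightarrow> real \<Rightarrow> real \<Rightarrow> real \<Rightarrow> real \<Rightarrow> real \<Rightarrow> real \<Rightarrow> real \<Rightarrow> real)
   \<Rightarrow> field2 \<Rightarrow> field2 \<Rightarrow> int \<Rightarrow> int \<Rightarrow> real" where
  "at_quad Q u v n m =
     Q (u n m) (v n m) (u (n+1) m) (v (n+1) m)
       (u n (m+1)) (v n (m+1)) (u (n+1) (m+1)) (v (n+1) (m+1))"

definition is_solution :: "field2 \<Rightarrow> field2 \<Rightarrow> bool" where
  "is_solution u v \<longleftrightarrow> (\<forall>n m. at_quad Q1 u v n m = 0 \<and> at_quad Q2 u v n m = 0)"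

text \<open>Linearisation: Q_(0,0) F + Q_(1,0) S(F) + Q_(0,1) T(F) + Q_(1,1) ST(F) at (n,m),
  i.e. the derivative at eps = 0 of Q evaluated on (u + eps F1, v + eps F2),
  where F1 u v n m, F2 u v n m are the values of the flow components at (n,m).\<close>
definition linearised_zero ::
  "(real \<Rightarrow> real \<Rightarrow> real \<Rightarrow> real \<Rightarrow> real \<Rightarrow> real \<Rightarrow> real \<Rightarrow> real \<Rightarrow> real)
   \<Rightarrow> (field2 \<Rightarrow> field2 \<Rightarrow> field2) \<Rightarrow> (field2 \<Rightarrow> field2 \<Rightarrow> field2)
   \<Rightarrow> field2 \<Rightarrow> field2 \<Rightarrow> int \<Rightarrow> int \<Rightarrow> bool" where
  "linearised_zero Q F1 F2 u v n m \<longleftrightarrow>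
     ((\<lambda>eps. at_quad Q (\<lambda>i j. u i j + eps * F1 u v i j) (\<lambda>i j. v i j + eps * F2 u v i j) n m)
        has_real_derivative 0) (at 0)"

definition Ft1 :: "field2 \<Rightarrow> field2 \<Rightarrow> field2" where
  "Ft1 u v n m = (u n m - v (n+1) m) / (u (n-1) m - v (n+1) m)"
definition Gt1 :: "field2 \<Rightarrow> field2 \<Rightarrow> field2" where
  "Gt1 u v n m = (u (n-1) m - v n m) / (u (n-1) m - v (n+1) m)"
definition Fs1 :: "field2 \<Rightarrow> field2 \<Rightarrow> field2" where
  "Fs1 u v n m = (u (n+1) m - u n m) * (v (n+1) m - u n m)"
definition Gs1 :: "field2 \<Rightarrow> field2 \<Rightarrow> field2" where
  "Gs1 u v n m = (u (n-1) m - v n m) * (v (n-1) m - v n m)"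

end

theory Submission
  imports Defs
begin

text \<open>The first equation says that \<open>v\<close> is the diagonal shift of \<open>u\<close>, so the system reduces
  to the scalar equation \<open>(u\<^sub>E - u)(u\<^sub>S - u) = (u\<^sub>N - u)(u\<^sub>W - u)\<close> relating the value
  of \<open>u\<close> at a vertex to its four neighbours. The linearisation of each equation is an explicit
  expression in the flow values; after eliminating \<open>v\<close> it becomes a rational identity in the
  values of \<open>u\<close> near the quad, which follows from the scalar equation.\<close>

lemma has_real_derivative_zero_iff:
  assumes "(f has_real_derivative D) (at x)"
  shows "(f has_real_derivative 0) (at x) \<longleftrightarrow> D = 0"
  using assms DERIV_unique by blast

lemma linearised_zero_Q1_iff:
  "linearised_zero Q1 F G u v n m \<longleftrightarrow> F u v n m = G u v (n+1) (m+1)"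
proof -
  have "((\<lambda>eps. at_quad Q1 (\<lambda>i j. u i j + eps * F u v i j) (\<lambda>i j. v i j + eps * G u v i j) n m)
          has_real_derivative F u v n m - G u v (n+1) (m+1)) (at 0)"
    unfolding at_quad_def Q1_def by (auto intro!: derivative_eq_intros)
  then show ?thesis
    unfolding linearised_zero_def by (simp add: has_real_derivative_zero_iff)
qed

lemma linearised_zero_Q2_iff:
  "linearised_zero Q2 F G u v n m \<longleftrightarrow>
     (F u v (n+1) m - F u v n m) * (v (n+1) m - u n m)
   + (u (n+1) m - u n m) * (G u v (n+1) m - F u v n m)
   - (F u v n (m+1) - F u v n m) * (v n (m+1) - u n m)
   - (u n (m+1) - u n m) * (G u v n (m+1) - F u v n m) = 0"
proof -
  have "((\<lambda>eps. at_quad Q2 (\<lambda>i j. u i j + eps * F u v i j) (\<lambda>i j. v i j + eps * G u v i j) n m)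
          has_real_derivative
     (F u v (n+1) m - F u v n m) * (v (n+1) m - u n m)
   + (u (n+1) m - u n m) * (G u v (n+1) m - F u v n m)
   - (F u v n (m+1) - F u v n m) * (v n (m+1) - u n m)
   - (u n (m+1) - u n m) * (G u v n (m+1) - F u v n m)) (at 0)"
    unfolding at_quad_def Q2_def by (auto intro!: derivative_eq_intros simp: algebra_simps)
  then show ?thesis
    unfolding linearised_zero_def by (simp add: has_real_derivative_zero_iff)
qed

lemma is_solution_v_eq:
  assumes "is_solution u v"
  shows "v i j = u (i-1) (j-1)"
proof -
  have "at_quad Q1 u v (i-1) (j-1) = 0"
    using assms unfolding is_solution_def by blast
  then show ?thesis by (simp add: at_quad_def Q1_def)
qed

lemma is_solution_quad_eq:
  assumes "is_solution u v"
  shows "(u (i+1) j - u i j) * (u i (j-1) - u i j) = (u i (j+1) - u i j) * (u (i-1) j - u i j)"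
proof -
  have "at_quad Q2 u v i j = 0"
    using assms unfolding is_solution_def by blast
  then show ?thesis by (simp add: at_quad_def Q2_def is_solution_v_eq[OF assms])
qed

text \<open>In the identities below, \<open>a\<close> is the value of \<open>u\<close> at a vertex and \<open>b, c, d, e\<close> are its
  values at the east, north, south and west neighbours, so the hypothesis is the scalar
  equation of the previous lemma; \<open>p, q\<close> are values at diagonal neighbours (south-east and
  north-west for the \<open>t\<^sub>1\<close> flow, south-west and north-east for the \<open>s\<^sub>1\<close> flow).\<close>

lemma t1_Q1_identity:
  fixes a b c d e :: real
  assumes "(b-a)*(d-a) = (c-a)*(e-a)" "e \<noteq> d" "b \<noteq> c"
  shows "(a-d)/(e-d) = (c-a)/(c-b)"
  using assms by (simp add: field_simps)

lemma t1_Q2_identity: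
  fixes a b c d e p q :: real
  assumes "(b-a)*(d-a) = (c-a)*(e-a)" "e \<noteq> d" "a \<noteq> p" "q \<noteq> a"
  shows "((b-p)/(a-p) - (a-d)/(e-d))*(d-a) + (b-a)*((a-d)/(a-p) - (a-d)/(e-d))
     - ((c-a)/(q-a) - (a-d)/(e-d))*(e-a) - (c-a)*((q-e)/(q-a) - (a-d)/(e-d)) = 0"
proof -
  define r where "r = (a-d)/(e-d)"
  have "(b-p)/(a-p) = 1 + (b-a)/(a-p)"
    using assms(3) by (simp add: field_simps)
  then have east: "((b-p)/(a-p) - r)*(d-a) + (b-a)*((a-d)/(a-p) - r) = (d-a) - r*(b+d-2*a)"
    by (simp add: algebra_simps add_divide_distrib[symmetric] diff_divide_distrib[symmetric])
  have "(q-e)/(q-a) = 1 + (a-e)/(q-a)"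
    using assms(4) by (simp add: field_simps)
  then have north: "((c-a)/(q-a) - r)*(e-a) + (c-a)*((q-e)/(q-a) - r) = (c-a) - r*(c+e-2*a)"
    by (simp add: algebra_simps add_divide_distrib[symmetric] diff_divide_distrib[symmetric])
  have "(d-a) - r*(b+d-2*a) - ((c-a) - r*(c+e-2*a)) = 0"
    using assms(1,2) unfolding r_def by (simp add: field_simps) algebra
  with east north show ?thesis unfolding r_def by linarith
qed

lemma s1_Q2_identity:
  fixes a b c d e p q :: real
  assumes "(b-a)*(d-a) = (c-a)*(e-a)"
  shows "((q-b)*(a-b) - (b-a)*(d-a))*(d-a) + (b-a)*((a-d)*(p-d) - (b-a)*(d-a))
     - ((q-c)*(a-c) - (b-a)*(d-a))*(e-a) - (c-a)*((a-e)*(p-e) - (b-a)*(d-a)) = 0"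
  using assms by algebra

theorem mainTheorem8:
  fixes u v :: "int \<Rightarrow> int \<Rightarrow> real" and n m :: int
  assumes "is_solution u v"
  shows "((\<forall>p\<in>{0,1}. \<forall>q\<in>{0,1}. u (n+p-1) (m+q) \<noteq> v (n+p+1) (m+q)) \<longrightarrow>
            linearised_zero Q1 Ft1 Gt1 u v n m \<and> linearised_zero Q2 Ft1 Gt1 u v n m)
       \<and> linearised_zero Q1 Fs1 Gs1 u v n m \<and> linearised_zero Q2 Fs1 Gs1 u v n m"
proof -
  note v_eq = is_solution_v_eq[OF assms]
  note quad = is_solution_quad_eq[OF assms, of n m]
  have t1: "linearised_zero Q1 Ft1 Gt1 u v n m \<and> linearised_zero Q2 Ft1 Gt1 u v n m"
    if "\<forall>p\<in>{0,1}. \<forall>q\<in>{0,1}. u (n+p-1) (m+q) \<noteq> v (n+p+1) (m+q)"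
  proof
    have "u (n-1) m \<noteq> u n (m-1)" "u n m \<noteq> u (n+1) (m-1)"
      "u (n-1) (m+1) \<noteq> u n m" "u (n+1) m \<noteq> u n (m+1)"
      using that by (auto simp: v_eq add.commute)
    note nondeg = this
    show "linearised_zero Q1 Ft1 Gt1 u v n m"
      using t1_Q1_identity[OF quad nondeg(1) nondeg(4)]
      by (simp add: linearised_zero_Q1_iff Ft1_def Gt1_def v_eq add.commute)
    show "linearised_zero Q2 Ft1 Gt1 u v n m"
      using t1_Q2_identity[OF quad nondeg(1-3)]
      by (simp add: linearised_zero_Q2_iff Ft1_def Gt1_def v_eq add.commute)
  qed
  have "linearised_zero Q1 Fs1 Gs1 u v n m"
    using quad by (simp add: linearised_zero_Q1_iff Fs1_def Gs1_def v_eq add.commute)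
  moreover have "linearised_zero Q2 Fs1 Gs1 u v n m"
    \<comment> \<open>\<open>Fs1\<close> at \<open>(n+1,m)\<close> and \<open>Gs1\<close> at \<open>(n,m+1)\<close> involve \<open>u\<close> at \<open>(n\<plusminus>2,m)\<close>; the scalar
       equation at \<open>(n\<plusminus>1,m)\<close> trades these for diagonal neighbours of \<open>(n,m)\<close>.\<close>
    using s1_Q2_identity[OF quad, where p = "u (n-1) (m-1)" and q = "u (n+1) (m+1)"]
      is_solution_quad_eq[OF assms, of "n+1" m] is_solution_quad_eq[OF assms, of "n-1" m]
    by (simp add: linearised_zero_Q2_iff Fs1_def Gs1_def v_eq add.commute)
  ultimately show ?thesis using t1 by blast
qed

end
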